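(* Let $k\ge2$ and let $(L,b,f)$ be an even $\Phi_{2^k}$-lattice such that the isometry $D_f$ of $D_L$ has order at most $2^{k-2}$. Then $\delta_L=0$.
   Context: A $\Phi_{n}$-lattice is a $\mathbb{Z}$-lattice $(L,b)$ with an isometry $f$ with $\Phi_n(f)=0$ ($\Phi_n$ the $n$-th cyclotomic polynomial). $D_L=L^\vee/L$ and $D_f$ is the induced isometry. Under these hypotheses $L$ is $2$-elementary, and for a $2$-elementary integral lattice, $\delta_L=0$ if $n(L^\vee)\subseteq\mathbb{Z}$ (i.e. $b(x,x)\in\mathbb{Z}$ for all $x\in L^\vee$) and $\delta_L=1$ otherwise. *)

theory Defs
  imports "HOL-Analysis.Analysis"
begin

text \<open>A Z-lattice of rank CARD('n) is modelled as the standard lattice Z^n inside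
  R^n, with the bilinear form b given by a Gram matrix G; an isometry f is given by a matrix F.\<close>

definition int_lattice :: "(real^'n) set" where
  "int_lattice = {x. \<forall>i. x $ i \<in> \<int>}"

definition integral_matrix :: "real^'n^'m \<Rightarrow> bool" where
  "integral_matrix A \<longleftrightarrow> (\<forall>i j. A $ i $ j \<in> \<int>)"

definition bform :: "real^'n^'n \<Rightarrow> real^'n \<Rightarrow> real^'n \<Rightarrow> real" where
  "bform G x y = x \<bullet> (G *v y)"

definition is_Z_lattice :: "real^'n^'n \<Rightarrow> bool" where
  "is_Z_lattice G \<longleftrightarrow> integral_matrix G \<and> transpose G = G \<and> det G \<noteq> 0"

definition even_lattice :: "real^'n^'n \<Rightarrow> bool" where
  "even_lattice G \<longleftrightarrow> (\<forall>x\<in>int_lattice. \<exists>m::int. bform G x x = 2 * of_int m)"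

definition lattice_isometry :: "real^'n^'n \<Rightarrow> real^'n^'n \<Rightarrow> bool" where
  "lattice_isometry G F \<longleftrightarrow> integral_matrix F \<and>
     (\<forall>x y. bform G (F *v x) (F *v y) = bform G x y)"

text \<open>Phi_{2^k}(x) = x^(2^(k-1)) + 1 for k \<ge> 1, so Phi_{2^k}(f) = 0 means f^(2^(k-1)) = -id.\<close>
definition cyclotomic_2pow_root :: "nat \<Rightarrow> real^'n^'n \<Rightarrow> bool" where
  "cyclotomic_2pow_root k F \<longleftrightarrow> (\<forall>x. ((\<lambda>v. F *v v) ^^ (2 ^ (k - 1))) x + x = 0)"

definition dual_lattice :: "real^'n^'n \<Rightarrow> (real^'n) set" where
  "dual_lattice G = {y. \<forall>x\<in>int_lattice. bform G y x \<in> \<int>}"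

text \<open>Order of the induced isometry D_f on D_L = L^dual / L.\<close>
definition disc_isometry_order :: "real^'n^'n \<Rightarrow> real^'n^'n \<Rightarrow> nat" where
  "disc_isometry_order G F = (LEAST m. 0 < m \<and>
      (\<forall>y\<in>dual_lattice G. ((\<lambda>v. F *v v) ^^ m) y - y \<in> int_lattice))"

definition delta_L :: "real^'n^'n \<Rightarrow> nat" where
  "delta_L G = (if \<forall>y\<in>dual_lattice G. bform G y y \<in> \<int> then 0 else 1)"

end

theory Submission
  imports Defs "HOL-Computational_Algebra.Primes"
begin

text \<open>Put \<open>h = f\<^bsup>2^(k-2)\<^esup>\<close>, so that \<open>h\<^sup>2 = f\<^bsup>2^(k-1)\<^esup> = -1\<close>. Since \<open>f\<^bsup>2^k\<^esup> = 1\<close>, the order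
  of \<open>D\<^sub>f\<close> is a power of 2, and the hypothesis makes it divide \<open>2\<^bsup>k-2\<^esup>\<close>; hence \<open>h\<close> acts
  trivially on \<open>D\<^sub>L\<close>, i.e. \<open>x = h y - y \<in> L\<close> for every \<open>y \<in> L\<^sup>\<or>\<close>. As \<open>h\<close> is an isometry
  with \<open>h\<^sup>2 = -1\<close>, \<open>b(h y, y) = b(h\<^sup>2 y, h y) = -b(h y, y)\<close> vanishes, so
  \<open>b(x, x) = 2 b(y, y)\<close>, and evenness of \<open>L\<close> gives \<open>b(y, y) \<in> \<int>\<close>.\<close>

lemma add_cancel_closed_iff_Least_dvd:
  fixes P :: "nat \<Rightarrow> bool"
  assumes "P n" "0 < n"
    and add: "\<And>a b. P a \<Longrightarrow> P b \<Longrightarrow> P (a + b)"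
    and cancel: "\<And>a b. P a \<Longrightarrow> P (a + b) \<Longrightarrow> P b"
  shows "P d \<longleftrightarrow> (LEAST m. 0 < m \<and> P m) dvd d"
proof -
  define m where "m = (LEAST m. 0 < m \<and> P m)"
  have m: "0 < m" "P m"
    using LeastI[of "\<lambda>m. 0 < m \<and> P m" n] assms(1,2) unfolding m_def by auto
  have "P 0"
    using cancel[of n 0] \<open>P n\<close> by simp
  have multiple: "P (q * m)" for q
    by (induction q) (simp_all add: \<open>P 0\<close> add m(2))
  show ?thesis
    unfolding m_def[symmetric]
  proof
    assume "P d"
    have "P (d mod m)"
      using cancel[of "d div m * m" "d mod m"] multiple \<open>P d\<close> by simp
    moreover have "d mod m < m"
      using m(1) by simp
    ultimately have "d mod m = 0"
      using not_less_Least[of "d mod m" "\<lambda>m. 0 < m \<and> P m"] unfolding m_def by auto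
    then show "m dvd d" by auto
  next
    assume "m dvd d"
    then show "P d"
      using multiple[of "d div m"] by simp
  qed
qed

lemma int_lattice_add: "x \<in> int_lattice \<Longrightarrow> y \<in> int_lattice \<Longrightarrow> x + y \<in> int_lattice"
  by (simp add: int_lattice_def)

lemma int_lattice_diff: "x \<in> int_lattice \<Longrightarrow> y \<in> int_lattice \<Longrightarrow> x - y \<in> int_lattice"
  by (simp add: int_lattice_def)

lemma integral_matrix_funpow_int_lattice:
  fixes F :: "real^'n^'n"
  assumes "integral_matrix F" "x \<in> int_lattice"
  shows "((\<lambda>v. F *v v) ^^ j) x \<in> int_lattice"
proof (induction j)
  case (Suc j)
  then show ?case
    using assms(1)
    unfolding int_lattice_def integral_matrix_def matrix_vector_mult_def
    by (auto intro!: Ints_mult)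
qed (use assms(2) in simp)

lemma funpow_matrix_vector_mult_diff:
  "((\<lambda>v. (F::real^'n^'n) *v v) ^^ j) (x - y) =
     ((\<lambda>v. F *v v) ^^ j) x - ((\<lambda>v. F *v v) ^^ j) y"
  by (induction j) (auto simp: matrix_vector_mult_diff_distrib)

lemma lattice_isometry_funpow:
  "lattice_isometry G (F::real^'n^'n) \<Longrightarrow>
     bform G (((\<lambda>v. F *v v) ^^ j) x) (((\<lambda>v. F *v v) ^^ j) y) = bform G x y"
  by (induction j) (auto simp: lattice_isometry_def)

lemma bform_commute: "transpose G = G \<Longrightarrow> bform G x y = bform G y x"
  unfolding bform_def
  by (metis dot_lmul_matrix inner_commute transpose_matrix_vector)

lemma bform_diff_left: "bform G (x - y) z = bform G x z - bform G y z"
  by (simp add: bform_def inner_diff_left)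

lemma bform_diff_right: "bform G z (x - y) = bform G z x - bform G z y"
  by (simp add: bform_def inner_diff_right matrix_vector_mult_diff_distrib)

lemma bform_minus_left: "bform G (- x) y = - bform G x y"
  by (simp add: bform_def)

lemma bform_self_Ints_if_square_minus_id:
  assumes "even_lattice G" "transpose G = G"
    and iso: "\<And>x y. bform G (h x) (h y) = bform G x y"
    and square: "\<And>x. h (h x) = - x"
    and "h y - y \<in> int_lattice"
  shows "bform G y y \<in> \<int>"
proof -
  have "bform G (h y) y = bform G (h (h y)) (h y)"
    by (simp add: iso)
  also have "\<dots> = - bform G (h y) y"
    using bform_commute[OF \<open>transpose G = G\<close>] by (simp add: square bform_minus_left)
  finally have orthogonal: "bform G (h y) y = 0"
    by simp
  have "bform G (h y - y) (h y - y) = 2 * bform G y y"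
    using orthogonal bform_commute[OF \<open>transpose G = G\<close>, of y "h y"]
    by (simp add: bform_diff_left bform_diff_right iso)
  moreover obtain c :: int where "bform G (h y - y) (h y - y) = 2 * of_int c"
    using assms(1,5) unfolding even_lattice_def by blast
  ultimately have "bform G y y = of_int c"
    by simp
  then show ?thesis
    by simp
qed

definition disc_power_trivial :: "real^'n^'n \<Rightarrow> real^'n^'n \<Rightarrow> nat \<Rightarrow> bool" where
  "disc_power_trivial G F m \<longleftrightarrow>
     (\<forall>y\<in>dual_lattice G. ((\<lambda>v. F *v v) ^^ m) y - y \<in> int_lattice)"

lemma disc_power_trivial_period:
  "(\<And>x. ((\<lambda>v. F *v v) ^^ N) x = x) \<Longrightarrow> disc_power_trivial G F N"
  by (simp add: disc_power_trivial_def int_lattice_def)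

lemma disc_power_trivial_add:
  assumes "integral_matrix F" "disc_power_trivial G F a" "disc_power_trivial G F b"
  shows "disc_power_trivial G F (a + b)"
  unfolding disc_power_trivial_def
proof
  fix y
  assume y: "y \<in> dual_lattice G"
  let ?f = "\<lambda>v. F *v v"
  have "(?f ^^ a) ((?f ^^ b) y - y) \<in> int_lattice" "(?f ^^ a) y - y \<in> int_lattice"
    using assms y unfolding disc_power_trivial_def
    by (simp_all add: integral_matrix_funpow_int_lattice)
  moreover have "(?f ^^ (a + b)) y - y = (?f ^^ a) ((?f ^^ b) y - y) + ((?f ^^ a) y - y)"
    by (simp add: funpow_add funpow_matrix_vector_mult_diff)
  ultimately show "(?f ^^ (a + b)) y - y \<in> int_lattice"
    by (metis int_lattice_add)
qed

lemma disc_power_trivial_cancel: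
  fixes F :: "real^'n^'n"
  assumes "integral_matrix F" "0 < N" "\<And>x. ((\<lambda>v. F *v v) ^^ N) x = x"
    and "disc_power_trivial G F a" "disc_power_trivial G F (a + b)"
  shows "disc_power_trivial G F b"
  unfolding disc_power_trivial_def
proof
  fix y
  assume y: "y \<in> dual_lattice G"
  let ?f = "\<lambda>v. F *v v"
  have "?f ^^ N = id"
    using assms(3) by auto
  then have "?f ^^ (a * N) = id"
    by (metis funpow_mult id_funpow mult.commute)
  moreover have "(N - 1) * a + a = a * N"
    using \<open>0 < N\<close> by (cases N) auto
  ultimately have inverse: "(?f ^^ ((N - 1) * a)) ((?f ^^ a) x) = x" for x
    by (metis funpow_add comp_apply id_apply)
  have "(?f ^^ a) ((?f ^^ b) y - y) = ((?f ^^ (a + b)) y - y) - ((?f ^^ a) y - y)"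
    by (simp add: funpow_add funpow_matrix_vector_mult_diff)
  moreover have "(?f ^^ (a + b)) y - y \<in> int_lattice" "(?f ^^ a) y - y \<in> int_lattice"
    using assms(4,5) y unfolding disc_power_trivial_def by simp_all
  ultimately have "(?f ^^ a) ((?f ^^ b) y - y) \<in> int_lattice"
    by (metis int_lattice_diff)
  then show "(?f ^^ b) y - y \<in> int_lattice"
    using integral_matrix_funpow_int_lattice[OF assms(1)] inverse by metis
qed

lemma disc_power_trivial_iff_disc_isometry_order_dvd:
  fixes F :: "real^'n^'n"
  assumes "integral_matrix F" "0 < N" "\<And>x. ((\<lambda>v. F *v v) ^^ N) x = x"
  shows "disc_power_trivial G F d \<longleftrightarrow> disc_isometry_order G F dvd d"
  unfolding disc_isometry_order_def disc_power_trivial_def[symmetric]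
  using add_cancel_closed_iff_Least_dvd[where P = "disc_power_trivial G F"] assms
    disc_power_trivial_period disc_power_trivial_add disc_power_trivial_cancel
  by blast

lemma cyclotomic_2pow_root_half:
  "cyclotomic_2pow_root k F \<Longrightarrow> ((\<lambda>v. F *v v) ^^ 2 ^ (k - 1)) x = - x"
  unfolding cyclotomic_2pow_root_def by (simp add: eq_neg_iff_add_eq_0)

lemma cyclotomic_2pow_root_period:
  fixes F :: "real^'n^'n"
  assumes "1 \<le> k" "cyclotomic_2pow_root k F"
  shows "((\<lambda>v. F *v v) ^^ 2 ^ k) x = x"
proof -
  have "(2::nat) ^ k = 2 ^ (k - 1) + 2 ^ (k - 1)"
    using assms(1) by (cases k) auto
  then show ?thesis
    using cyclotomic_2pow_root_half[OF assms(2), of x] cyclotomic_2pow_root_half[OF assms(2), of "- x"]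
    by (simp add: funpow_add)
qed

theorem corollary3p11:
  fixes G F :: "real^'n^'n" and k :: nat
  assumes "k \<ge> 2"
    and "is_Z_lattice G"
    and "lattice_isometry G F"
    and "cyclotomic_2pow_root k F"
    and "even_lattice G"
    and "disc_isometry_order G F \<le> 2 ^ (k - 2)"
  shows "delta_L G = 0"
proof -
  let ?h = "(\<lambda>v. F *v v) ^^ 2 ^ (k - 2)"
  have "integral_matrix F" "transpose G = G"
    using assms(2,3) by (simp_all add: lattice_isometry_def is_Z_lattice_def)
  have period: "((\<lambda>v. F *v v) ^^ 2 ^ k) x = x" for x
    using cyclotomic_2pow_root_period[OF _ assms(4)] assms(1) by simp
  note order_dvd = disc_power_trivial_iff_disc_isometry_order_dvd[OF \<open>integral_matrix F\<close> _ period]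
  have "disc_isometry_order G F dvd 2 ^ k"
    using order_dvd disc_power_trivial_period[OF period] by simp
  then obtain j where "disc_isometry_order G F = 2 ^ j"
    using divides_primepow_nat[of 2] by auto
  with assms(6) have "disc_isometry_order G F dvd 2 ^ (k - 2)"
    by (simp add: le_imp_power_dvd)
  then have trivial: "disc_power_trivial G F (2 ^ (k - 2))"
    using order_dvd assms(1) by simp
  have "(2::nat) ^ (k - 2) + 2 ^ (k - 2) = 2 ^ (k - 1)"
    using assms(1) by (cases k; cases "k - 1") auto
  then have square: "?h (?h x) = - x" for x
    using cyclotomic_2pow_root_half[OF assms(4)] by (metis funpow_add comp_apply)
  have "bform G y y \<in> \<int>" if "y \<in> dual_lattice G" for y
    using bform_self_Ints_if_square_minus_id[OF assms(5) \<open>transpose G = G\<close>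
        lattice_isometry_funpow[OF assms(3)] square] trivial that
    unfolding disc_power_trivial_def by blast
  then show ?thesis
    unfolding delta_L_def by simp
qed

end
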